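(* (a) In Case I, there exist $\delta,\beta_0,c_2>0$ such that, setting $B_{l,\beta}=\,]-2\beta^{1/\alpha},-\beta^{1/\alpha}[\times]-\delta,\delta[$, for every $0<\beta\le\beta_0$ one has $\frac{\partial h_0}{\partial x_1}\le -c_2\beta^{1-1/\alpha}$ on $B_{l,\beta}$. (b) In Case II, there exist $\theta_0\in\,]0,\pi/2[$ and $c_2,\beta_0>0$ such that, setting $B_{p,\beta}=\{(x_1,x_2)\in\mathbb{R}^2:\ \beta^{1/\alpha}\le\rho\le2\beta^{1/\alpha},\ \pi-\theta_0\le\theta\le\pi+\theta_0\}$ (where $(\rho,\theta)$ are polar coordinates of $(x_1,x_2)$), for every $0<\beta\le\beta_0$ one has $\frac{\partial h_0}{\partial x_1}\le-c_2\beta^{1-1/\alpha}$ on $B_{p,\beta}$.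
   Context: Let $\Omega\subset\mathbb{R}^2$ be a bounded open set with regular boundary, $0\in\Omega$, and $h_0\in C^1(\bar\Omega)$, $h_0\ge0$, $\min_\Omega h_0=h_0(0)=0$. Case I (line contact): $h_0(0,x_2)=0$ whenever $(0,x_2)\in\Omega$, $h_0(x_1,x_2)>0$ for $x_1\neq0$, and there exist $\alpha\ge1$, a neighborhood $W$ of $0$ and a regular function $h_1>0$ on $\bar W$ with $h_0(x_1,x_2)=|x_1|^\alpha h_1(x_1,x_2)$ on $W$. Case II (point contact): $h_0(x)>0$ for $x\in\Omega\setminus\{0\}$, and there exist $\alpha\ge1$, a neighborhood $W$ of $0$ and a regular $h_1>0$ on $\bar W$ with $h_0(x)=|x|^\alpha h_1(x)$ on $W$. *)

theory Defs
  imports "HOL-Analysis.Analysis"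
begin

definition C1_closure :: "(real \<times> real) set \<Rightarrow> (real \<times> real \<Rightarrow> real) \<Rightarrow> bool" where
  "C1_closure S f \<longleftrightarrow> continuous_on (closure S) f \<and>
     (\<exists>g. continuous_on (closure S) g \<and>
          (\<forall>x\<in>S. (f has_derivative (\<lambda>v. g x \<bullet> v)) (at x)))"

definition C1_boundary :: "(real \<times> real) set \<Rightarrow> bool" where
  "C1_boundary \<Omega> \<longleftrightarrow> (\<forall>p\<in>frontier \<Omega>. \<exists>U \<phi> g. open U \<and> p \<in> U \<and>
     continuous_on U g \<and> (\<forall>x\<in>U. (\<phi> has_derivative (\<lambda>v. g x \<bullet> v)) (at x)) \<and>
     (\<forall>x\<in>U. g x \<noteq> 0) \<and> \<Omega> \<inter> U = {x\<in>U. \<phi> x < 0})"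

definition partial1 :: "(real \<times> real \<Rightarrow> real) \<Rightarrow> real \<times> real \<Rightarrow> real" where
  "partial1 h x = deriv (\<lambda>t. h (t, snd x)) (fst x)"

definition Bp :: "real \<Rightarrow> real \<Rightarrow> real \<Rightarrow> (real \<times> real) set" where
  "Bp \<alpha> \<theta>0 \<beta> = {x. \<beta> powr (1/\<alpha>) \<le> norm x \<and> norm x \<le> 2 * \<beta> powr (1/\<alpha>) \<and>
      (\<exists>\<theta>. pi - \<theta>0 \<le> \<theta> \<and> \<theta> \<le> pi + \<theta>0 \<and> x = (norm x * cos \<theta>, norm x * sin \<theta>))}"

definition Bl :: "real \<Rightarrow> real \<Rightarrow> real \<Rightarrow> (real \<times> real) set" where
  "Bl \<alpha> \<delta> \<beta> = {x. -2 * \<beta> powr (1/\<alpha>) < fst x \<and> fst x < - (\<beta> powr (1/\<alpha>)) \<and>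
      -\<delta> < snd x \<and> snd x < \<delta>}"

end

theory Submission
  imports Defs
begin

text \<open>Near the contact point h1 is bounded below by some m > 0 and its x1-derivative is bounded
  by some M. Differentiating the factorisation h0 = d^\<alpha> h1, where d is the distance |x1| to the
  contact line (case I) or the distance \<rho> to the contact point (case II), the term coming from
  d^\<alpha> dominates on the side x1 < 0: for small d, and using x1 \<le> -\<rho>/2 in the sector of case II,
  one gets \<partial>h0/\<partial>x1 \<le> -c d^(\<alpha>-1). On the sets B_{l,\<beta>} and B_{p,\<beta>} we have d \<ge> \<beta>^(1/\<alpha>),
  hence d^(\<alpha>-1) \<ge> \<beta>^(1-1/\<alpha>).\<close>

lemma has_field_derivative_first_of_gradient:
  assumes "(f has_derivative (\<lambda>v. G \<bullet> v)) (at (a, b))"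
  shows "((\<lambda>t. f (t, b)) has_real_derivative fst G) (at a)"
proof -
  have "((\<lambda>t. (t, b)) has_derivative (\<lambda>s. (s, 0))) (at a)"
    by (auto intro!: derivative_eq_intros)
  from has_derivative_compose[OF this assms]
  have "((\<lambda>t. f (t, b)) has_derivative (\<lambda>s. G \<bullet> (s, 0))) (at a)"
    by (simp add: o_def)
  moreover have "(\<lambda>s. G \<bullet> (s, 0)) = (\<lambda>s. fst G * s)"
    by (cases G) (auto simp: inner_Pair)
  ultimately show ?thesis
    by (simp add: has_field_derivative_def)
qed

lemma partial1_eqI:
  assumes "open U" "x \<in> U" "\<forall>y\<in>U. h y = f y"
    and "((\<lambda>t. f (t, snd x)) has_real_derivative D) (at (fst x))"
  shows "partial1 h x = D"
proof -
  have "open ((\<lambda>t. (t, snd x)) -` U)"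
    by (intro open_vimage assms(1) continuous_intros)
  from has_field_derivative_transform_within_open[OF assms(4) this]
  have "((\<lambda>t. h (t, snd x)) has_real_derivative D) (at (fst x))"
    using assms(2,3) by simp
  then show ?thesis
    unfolding partial1_def by (rule DERIV_imp_deriv)
qed

lemma partial1_abs_powr_mult:
  assumes "open W" "x \<in> W" "fst x < 0"
    and "\<forall>y\<in>W. h0 y = \<bar>fst y\<bar> powr \<alpha> * h1 y"
    and "(h1 has_derivative (\<lambda>v. G \<bullet> v)) (at x)"
  shows "partial1 h0 x = - \<alpha> * (- fst x) powr (\<alpha> - 1) * h1 x + (- fst x) powr \<alpha> * fst G"
proof (rule partial1_eqI)
  show "open (W \<inter> {y. fst y < 0})"
    by (intro open_Int assms(1) open_Collect_less continuous_intros)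
  show "\<forall>y\<in>W \<inter> {y. fst y < 0}. h0 y = (- fst y) powr \<alpha> * h1 y"
    using assms(4) by auto
  have "((\<lambda>t. h1 (t, snd x)) has_real_derivative fst G) (at (fst x))"
    using has_field_derivative_first_of_gradient assms(5) by (metis prod.collapse)
  then show "((\<lambda>t. (- fst (t, snd x)) powr \<alpha> * h1 (t, snd x)) has_real_derivative
      - \<alpha> * (- fst x) powr (\<alpha> - 1) * h1 x + (- fst x) powr \<alpha> * fst G) (at (fst x))"
    using assms(3) by (auto intro!: derivative_eq_intros)
qed (use assms in auto)

lemma partial1_norm_powr_mult:
  assumes "open W" "x \<in> W" "x \<noteq> 0"
    and "\<forall>y\<in>W. h0 y = norm y powr \<alpha> * h1 y"
    and "(h1 has_derivative (\<lambda>v. G \<bullet> v)) (at x)"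
  shows "partial1 h0 x = \<alpha> * norm x powr (\<alpha> - 1) * (fst x / norm x) * h1 x + norm x powr \<alpha> * fst G"
proof (rule partial1_eqI)
  obtain x1 x2 where x: "x = (x1, x2)" by (cases x)
  have R: "x1\<^sup>2 + x2\<^sup>2 > 0" using assms(3) x by (auto simp: sum_power2_gt_zero_iff zero_prod_def)
  have "((\<lambda>t. h1 (t, x2)) has_real_derivative fst G) (at x1)"
    using has_field_derivative_first_of_gradient assms(5) x by blast
  then have "((\<lambda>t. sqrt (t\<^sup>2 + x2\<^sup>2) powr \<alpha> * h1 (t, x2)) has_real_derivative
      \<alpha> * sqrt (x1\<^sup>2 + x2\<^sup>2) powr (\<alpha> - 1) * (x1 / sqrt (x1\<^sup>2 + x2\<^sup>2)) * h1 x
      + sqrt (x1\<^sup>2 + x2\<^sup>2) powr \<alpha> * fst G) (at x1)"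
    using R x by (auto intro!: derivative_eq_intros simp: field_simps)
  then show "((\<lambda>t. norm (t, snd x) powr \<alpha> * h1 (t, snd x)) has_real_derivative
      \<alpha> * norm x powr (\<alpha> - 1) * (fst x / norm x) * h1 x + norm x powr \<alpha> * fst G) (at (fst x))"
    by (simp add: x norm_Pair)
qed (use assms in auto)

lemma C1_closure_local_bounds:
  assumes "open W" "0 \<in> W" "C1_closure W h1" "\<forall>x\<in>closure W. h1 x > 0"
  obtains r m M g where "r > 0" "m > 0" "M > 0" "ball 0 r \<subseteq> W"
    "\<forall>x\<in>ball 0 r. m \<le> h1 x \<and> \<bar>fst (g x)\<bar> \<le> M"
    "\<forall>x\<in>W. (h1 has_derivative (\<lambda>v. g x \<bullet> v)) (at x)"
proof -
  obtain g where g_cont: "continuous_on (closure W) g"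
    and g_grad: "\<forall>x\<in>W. (h1 has_derivative (\<lambda>v. g x \<bullet> v)) (at x)"
    using assms(3) unfolding C1_closure_def by blast
  define m where "m = h1 0 / 2"
  define M where "M = norm (g 0) + 1"
  have "m > 0" using assms(2,4) closure_subset by (force simp: m_def)
  have "isCont h1 0"
    using g_grad assms(2) has_derivative_continuous by blast
  then have "\<forall>\<^sub>F x in nhds 0. m < h1 x"
    using \<open>m > 0\<close> by (intro order_tendstoD(1)) (auto simp: m_def isCont_def tendsto_at_iff_tendsto_nhds)
  moreover have "isCont g 0"
    using continuous_on_interior[OF g_cont] assms(1,2)
    by (metis closure_subset interior_maximal subsetD)
  then have "((\<lambda>x. norm (g x)) \<longlongrightarrow> norm (g 0)) (nhds 0)"
    by (intro tendsto_norm) (simp add: isCont_def tendsto_at_iff_tendsto_nhds)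
  then have "\<forall>\<^sub>F x in nhds 0. norm (g x) < M"
    by (rule order_tendstoD(2)) (simp add: M_def)
  moreover have "\<forall>\<^sub>F x in nhds 0. x \<in> W"
    using assms(1,2) by (rule eventually_nhds_in_open)
  ultimately have "\<forall>\<^sub>F x in nhds 0. x \<in> W \<and> m \<le> h1 x \<and> \<bar>fst (g x)\<bar> \<le> M"
    by eventually_elim (metis less_imp_le norm_fst_le order_trans prod.collapse real_norm_def)
  then obtain r where "r > 0" "\<forall>x\<in>ball 0 r. x \<in> W \<and> m \<le> h1 x \<and> \<bar>fst (g x)\<bar> \<le> M"
    unfolding eventually_nhds_metric by (metis mem_ball dist_commute)
  moreover have "M > 0" by (simp add: M_def add_nonneg_pos)
  ultimately show ?thesis
    using that \<open>m > 0\<close> g_grad by blast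
qed

lemma powr_derivative_estimate:
  fixes a h G m M \<alpha> :: real
  assumes "0 < a" "0 \<le> \<alpha>" "m \<le> h" "\<bar>G\<bar> \<le> M" "a * M \<le> \<alpha> * m / 2"
  shows "- \<alpha> * a powr (\<alpha> - 1) * h + a powr \<alpha> * G \<le> - (\<alpha> * m / 2) * a powr (\<alpha> - 1)"
proof -
  have "a powr \<alpha> = a * a powr (\<alpha> - 1)"
    using assms(1) by (simp add: powr_mult_base)
  then have "- \<alpha> * a powr (\<alpha> - 1) * h + a powr \<alpha> * G = a powr (\<alpha> - 1) * (a * G - \<alpha> * h)"
    by (simp add: algebra_simps)
  also have "\<dots> \<le> a powr (\<alpha> - 1) * (a * M - \<alpha> * m)"
    using assms by (intro mult_left_mono diff_mono mult_left_mono) (auto dest: abs_le_D1)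
  also have "\<dots> \<le> a powr (\<alpha> - 1) * (- (\<alpha> * m / 2))"
    using assms(5) by (intro mult_left_mono) auto
  finally show ?thesis by (simp add: mult.commute)
qed

lemma powr_inverse_le:
  fixes \<alpha> \<beta> s :: real
  assumes "0 < \<alpha>" "0 \<le> \<beta>" "0 \<le> s" "\<beta> \<le> s powr \<alpha>"
  shows "\<beta> powr (1 / \<alpha>) \<le> s"
  using powr_mono2[of "1 / \<alpha>", OF _ assms(2,4)] assms by (simp add: powr_powr)

lemma powr_one_minus_inverse_le:
  fixes \<alpha> \<beta> a :: real
  assumes "1 \<le> \<alpha>" "0 < \<beta>" "\<beta> powr (1 / \<alpha>) \<le> a"
  shows "\<beta> powr (1 - 1 / \<alpha>) \<le> a powr (\<alpha> - 1)"
proof -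
  have "\<beta> powr (1 - 1 / \<alpha>) = (\<beta> powr (1 / \<alpha>)) powr (\<alpha> - 1)"
    using assms(1) by (simp add: powr_powr field_simps)
  also have "\<dots> \<le> a powr (\<alpha> - 1)"
    using assms by (intro powr_mono2) auto
  finally show ?thesis .
qed

lemma cos_le_neg_half:
  assumes "pi - pi / 3 \<le> t" "t \<le> pi + pi / 3"
  shows "cos t \<le> - 1 / 2"
proof -
  have "\<bar>t - pi\<bar> \<le> pi / 3"
    unfolding abs_le_iff using assms by linarith
  then have "cos (pi / 3) \<le> cos \<bar>t - pi\<bar>"
    by (intro cos_monotone_0_pi_le) auto
  moreover have "cos \<bar>t - pi\<bar> = - cos t"
    by (simp add: cos_diff)
  ultimately show ?thesis
    by (simp add: cos_60)
qed

lemma Bp_pi_third_bounds: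
  assumes "x \<in> Bp \<alpha> (pi / 3) \<beta>"
  shows "\<beta> powr (1 / \<alpha>) \<le> norm x" "norm x \<le> 2 * \<beta> powr (1 / \<alpha>)" "fst x \<le> - norm x / 2"
proof -
  obtain \<theta> where \<theta>: "pi - pi / 3 \<le> \<theta>" "\<theta> \<le> pi + pi / 3"
    and "fst x = norm x * cos \<theta>"
    using assms unfolding Bp_def by (auto dest: arg_cong[where f = fst])
  then show "fst x \<le> - norm x / 2"
    using mult_left_mono[OF cos_le_neg_half[OF \<theta>], of "norm x"] by simp
  show "\<beta> powr (1 / \<alpha>) \<le> norm x" "norm x \<le> 2 * \<beta> powr (1 / \<alpha>)"
    using assms by (simp_all add: Bp_def)
qed

lemma partial1_le_on_Bl:
  fixes h0 h1 :: "real \<times> real \<Rightarrow> real" and \<alpha> :: real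
  assumes "1 \<le> \<alpha>" "open W" "(0,0) \<in> W" "C1_closure W h1" "\<forall>x\<in>closure W. h1 x > 0"
    and h0_eq: "\<forall>x1 x2. (x1, x2) \<in> W \<longrightarrow> h0 (x1, x2) = \<bar>x1\<bar> powr \<alpha> * h1 (x1, x2)"
  shows "\<exists>\<delta> \<beta>0 c2. \<delta> > 0 \<and> \<beta>0 > 0 \<and> c2 > 0 \<and>
           (\<forall>\<beta>. 0 < \<beta> \<and> \<beta> \<le> \<beta>0 \<longrightarrow>
              (\<forall>x\<in>Bl \<alpha> \<delta> \<beta>. partial1 h0 x \<le> - c2 * \<beta> powr (1 - 1/\<alpha>)))"
proof -
  have "0 \<in> W"
    using assms(3) by (simp add: zero_prod_def)
  obtain r m M g where "r > 0" "m > 0" "M > 0" "ball 0 r \<subseteq> W"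
    and bounds: "\<forall>x\<in>ball 0 r. m \<le> h1 x \<and> \<bar>fst (g x)\<bar> \<le> M"
    and grad: "\<forall>x\<in>W. (h1 has_derivative (\<lambda>v. g x \<bullet> v)) (at x)"
    using C1_closure_local_bounds[OF assms(2) \<open>0 \<in> W\<close> assms(4,5)] by blast
  define s where "s = min (r / 4) (\<alpha> * m / (4 * M))"
  define c2 where "c2 = \<alpha> * m / 2"
  have "s > 0" "c2 > 0"
    using \<open>r > 0\<close> \<open>m > 0\<close> \<open>M > 0\<close> assms(1) by (auto simp: s_def c2_def)
  have "partial1 h0 x \<le> - c2 * \<beta> powr (1 - 1/\<alpha>)"
    if \<beta>: "0 < \<beta>" "\<beta> \<le> s powr \<alpha>" and x: "x \<in> Bl \<alpha> (r / 4) \<beta>" for \<beta> x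
  proof -
    define b where "b = \<beta> powr (1 / \<alpha>)"
    define a where "a = - fst x"
    have "b \<le> s"
      using powr_inverse_le \<beta> \<open>s > 0\<close> assms(1) by (simp add: b_def)
    have "b < a" "a < 2 * b" "\<bar>snd x\<bar> < r / 4"
      using x by (auto simp: Bl_def a_def b_def)
    have "b > 0"
      using \<beta>(1) by (simp add: b_def)
    with \<open>b < a\<close> have "a > 0" by linarith
    have "norm x < r"
      using norm_Pair_le[of "fst x" "snd x"] \<open>a < 2 * b\<close> \<open>b \<le> s\<close> \<open>a > 0\<close> \<open>\<bar>snd x\<bar> < r / 4\<close>
      by (simp add: a_def s_def)
    then have x_ball: "x \<in> ball 0 r" by simp
    have "partial1 h0 x = - \<alpha> * a powr (\<alpha> - 1) * h1 x + a powr \<alpha> * fst (g x)"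
      unfolding a_def
    proof (rule partial1_abs_powr_mult)
      show "\<forall>y\<in>ball 0 r. h0 y = \<bar>fst y\<bar> powr \<alpha> * h1 y"
        using h0_eq \<open>ball 0 r \<subseteq> W\<close> by auto
    qed (use x_ball \<open>a > 0\<close> grad \<open>ball 0 r \<subseteq> W\<close> in \<open>auto simp: a_def\<close>)
    also have "\<dots> \<le> - c2 * a powr (\<alpha> - 1)"
    proof -
      have "a * M \<le> 2 * s * M"
        using \<open>a < 2 * b\<close> \<open>b \<le> s\<close> \<open>M > 0\<close> by (intro mult_right_mono) auto
      also have "\<dots> \<le> \<alpha> * m / 2"
        using \<open>M > 0\<close> by (simp add: s_def min_def field_simps)
      finally show ?thesis
        unfolding c2_def using bounds x_ball \<open>a > 0\<close> assms(1)
        by (intro powr_derivative_estimate[where M = M]) auto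
    qed
    also have "\<dots> \<le> - c2 * \<beta> powr (1 - 1/\<alpha>)"
      using powr_one_minus_inverse_le[OF assms(1) \<beta>(1), of a] \<open>b < a\<close> \<open>c2 > 0\<close>
      by (simp add: b_def)
    finally show ?thesis .
  qed
  then show ?thesis
    using \<open>r > 0\<close> \<open>s > 0\<close> \<open>c2 > 0\<close>
    by (intro exI[of _ "r / 4"] exI[of _ "s powr \<alpha>"] exI[of _ c2]) auto
qed

lemma partial1_le_on_Bp:
  fixes h0 h1 :: "real \<times> real \<Rightarrow> real" and \<alpha> :: real
  assumes "1 \<le> \<alpha>" "open W" "(0,0) \<in> W" "C1_closure W h1" "\<forall>x\<in>closure W. h1 x > 0"
    and h0_eq: "\<forall>x\<in>W. h0 x = norm x powr \<alpha> * h1 x"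
  shows "\<exists>\<theta>0 c2 \<beta>0. 0 < \<theta>0 \<and> \<theta>0 < pi/2 \<and> c2 > 0 \<and> \<beta>0 > 0 \<and>
           (\<forall>\<beta>. 0 < \<beta> \<and> \<beta> \<le> \<beta>0 \<longrightarrow>
              (\<forall>x\<in>Bp \<alpha> \<theta>0 \<beta>. partial1 h0 x \<le> - c2 * \<beta> powr (1 - 1/\<alpha>)))"
proof -
  have "0 \<in> W"
    using assms(3) by (simp add: zero_prod_def)
  obtain r m M g where "r > 0" "m > 0" "M > 0" "ball 0 r \<subseteq> W"
    and bounds: "\<forall>x\<in>ball 0 r. m \<le> h1 x \<and> \<bar>fst (g x)\<bar> \<le> M"
    and grad: "\<forall>x\<in>W. (h1 has_derivative (\<lambda>v. g x \<bullet> v)) (at x)"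
    using C1_closure_local_bounds[OF assms(2) \<open>0 \<in> W\<close> assms(4,5)] by blast
  define s where "s = min (r / 4) (\<alpha> * m / (8 * M))"
  define c2 where "c2 = \<alpha> * (m / 2) / 2"
  have "s > 0" "c2 > 0"
    using \<open>r > 0\<close> \<open>m > 0\<close> \<open>M > 0\<close> assms(1) by (auto simp: s_def c2_def)
  have "partial1 h0 x \<le> - c2 * \<beta> powr (1 - 1/\<alpha>)"
    if \<beta>: "0 < \<beta>" "\<beta> \<le> s powr \<alpha>" and x: "x \<in> Bp \<alpha> (pi / 3) \<beta>" for \<beta> x
  proof -
    define b where "b = \<beta> powr (1 / \<alpha>)"
    define \<rho> where "\<rho> = norm x"
    have "b \<le> s"
      using powr_inverse_le \<beta> \<open>s > 0\<close> assms(1) by (simp add: b_def)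
    have "b \<le> \<rho>" "\<rho> \<le> 2 * b" "fst x \<le> - \<rho> / 2"
      using Bp_pi_third_bounds[OF x] by (simp_all add: b_def \<rho>_def)
    have "b > 0"
      using \<beta>(1) by (simp add: b_def)
    with \<open>b \<le> \<rho>\<close> have "\<rho> > 0" by linarith
    define c where "c = - fst x / \<rho>"
    have "1 / 2 \<le> c"
      using \<open>fst x \<le> - \<rho> / 2\<close> \<open>\<rho> > 0\<close> by (simp add: c_def field_simps)
    have "s \<le> r / 4"
      by (simp add: s_def)
    then have x_ball: "x \<in> ball 0 r"
      using \<open>\<rho> \<le> 2 * b\<close> \<open>b \<le> s\<close> \<open>r > 0\<close> by (simp add: \<rho>_def)
    have "partial1 h0 x = \<alpha> * \<rho> powr (\<alpha> - 1) * (fst x / \<rho>) * h1 x + \<rho> powr \<alpha> * fst (g x)"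
      unfolding \<rho>_def
    proof (rule partial1_norm_powr_mult)
      show "\<forall>y\<in>ball 0 r. h0 y = norm y powr \<alpha> * h1 y"
        using h0_eq \<open>ball 0 r \<subseteq> W\<close> by auto
    qed (use x_ball \<open>\<rho> > 0\<close> grad \<open>ball 0 r \<subseteq> W\<close> in \<open>auto simp: \<rho>_def\<close>)
    txt \<open>With c \<ge> 1/2 absorbed into h1, this is the estimate of case I with m/2 in place of m.\<close>
    also have "\<dots> = - \<alpha> * \<rho> powr (\<alpha> - 1) * (c * h1 x) + \<rho> powr \<alpha> * fst (g x)"
      by (simp add: c_def)
    also have "\<dots> \<le> - c2 * \<rho> powr (\<alpha> - 1)"
    proof -
      have "m \<le> h1 x"
        using bounds x_ball by blast
      then have "m / 2 \<le> c * h1 x"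
        using mult_mono[OF \<open>1 / 2 \<le> c\<close> \<open>m \<le> h1 x\<close>] \<open>1 / 2 \<le> c\<close> \<open>m > 0\<close> by simp
      moreover have "\<rho> * M \<le> 2 * s * M"
        using \<open>\<rho> \<le> 2 * b\<close> \<open>b \<le> s\<close> \<open>M > 0\<close> by (intro mult_right_mono) auto
      moreover have "\<dots> \<le> \<alpha> * (m / 2) / 2"
        using \<open>M > 0\<close> by (simp add: s_def min_def field_simps)
      ultimately show ?thesis
        unfolding c2_def using bounds x_ball \<open>\<rho> > 0\<close> assms(1)
        by (intro powr_derivative_estimate[where M = M]) auto
    qed
    also have "\<dots> \<le> - c2 * \<beta> powr (1 - 1/\<alpha>)"
      using powr_one_minus_inverse_le[OF assms(1) \<beta>(1), of \<rho>] \<open>b \<le> \<rho>\<close> \<open>c2 > 0\<close>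
      by (simp add: b_def)
    finally show ?thesis .
  qed
  moreover have "0 < pi / 3" "pi / 3 < pi / 2"
    by auto
  ultimately show ?thesis
    using \<open>s > 0\<close> \<open>c2 > 0\<close>
    by (intro exI[of _ "pi / 3"] exI[of _ c2] exI[of _ "s powr \<alpha>"]) auto
qed

theorem lemma3p3:
  fixes \<Omega> :: "(real \<times> real) set" and h0 :: "real \<times> real \<Rightarrow> real" and \<alpha> :: real
  assumes "open \<Omega>" "bounded \<Omega>" "C1_boundary \<Omega>" "(0,0) \<in> \<Omega>"
    and "C1_closure \<Omega> h0"
    and "\<forall>x\<in>closure \<Omega>. 0 \<le> h0 x" and "h0 (0,0) = 0"
  shows "((\<forall>x2. (0, x2) \<in> \<Omega> \<longrightarrow> h0 (0, x2) = 0) \<and>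
          (\<forall>x1 x2. (x1, x2) \<in> \<Omega> \<and> x1 \<noteq> 0 \<longrightarrow> h0 (x1, x2) > 0) \<and>
          1 \<le> \<alpha> \<and>
          (\<exists>W h1. open W \<and> (0,0) \<in> W \<and> C1_closure W h1 \<and>
             (\<forall>x\<in>closure W. h1 x > 0) \<and>
             (\<forall>x1 x2. (x1, x2) \<in> W \<longrightarrow> h0 (x1, x2) = \<bar>x1\<bar> powr \<alpha> * h1 (x1, x2)))
         \<longrightarrow> (\<exists>\<delta> \<beta>0 c2. \<delta> > 0 \<and> \<beta>0 > 0 \<and> c2 > 0 \<and>
               (\<forall>\<beta>. 0 < \<beta> \<and> \<beta> \<le> \<beta>0 \<longrightarrow>
                  (\<forall>x\<in>Bl \<alpha> \<delta> \<beta>. partial1 h0 x \<le> - c2 * \<beta> powr (1 - 1/\<alpha>)))))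
       \<and> ((\<forall>x\<in>\<Omega>. x \<noteq> (0,0) \<longrightarrow> h0 x > 0) \<and>
          1 \<le> \<alpha> \<and>
          (\<exists>W h1. open W \<and> (0,0) \<in> W \<and> C1_closure W h1 \<and>
             (\<forall>x\<in>closure W. h1 x > 0) \<and>
             (\<forall>x\<in>W. h0 x = norm x powr \<alpha> * h1 x))
         \<longrightarrow> (\<exists>\<theta>0 c2 \<beta>0. 0 < \<theta>0 \<and> \<theta>0 < pi/2 \<and> c2 > 0 \<and> \<beta>0 > 0 \<and>
               (\<forall>\<beta>. 0 < \<beta> \<and> \<beta> \<le> \<beta>0 \<longrightarrow>
                  (\<forall>x\<in>Bp \<alpha> \<theta>0 \<beta>. partial1 h0 x \<le> - c2 * \<beta> powr (1 - 1/\<alpha>)))))"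
  by (intro conjI impI; elim conjE exE; blast intro: partial1_le_on_Bl partial1_le_on_Bp)

end
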